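(* For every positive integer $s$, the number $r(s)$ of $(s,s+1,s+2)$-core partitions (equivalently, the number of order ideals of $T_s$) satisfies $r(s)=r(s-1)+\sum_{i=2}^{s}r(i-2)\,r(s-i)$ for $s\ge 2$ (with $r(0)=1$), and $$r(s)=M_s=\sum_{k\ge 0}\binom{s}{2k}C_k,$$ where $C_k=\frac{1}{k+1}\binom{2k}{k}$ is the $k$th Catalan number, i.e. $r(s)$ is the $s$th Motzkin number.
   Context: A partition is a $t$-core if none of the hook lengths of its boxes is divisible by $t$; an $(s,s+1,s+2)$-core is a partition that is simultaneously an $s$-core, an $(s+1)$-core and an $(s+2)$-core. $T_s$ denotes the set of positive integers not of the form $k_1s+k_2(s+1)+k_3(s+2)$ with $k_i\in\mathbb{N}$, ordered by $y\ge x$ iff there is a chain $y=y_0,\ldots,y_l=x$ in $T_s$ with consecutive differences in $\{s,s+1,s+2\}$; we set $T_0=\emptyset$, so $r(0)=1$ (the empty partition). *)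

theory Defs
  imports Main
begin

definition is_partition :: "nat list \<Rightarrow> bool" where
  "is_partition lam \<longleftrightarrow> sorted_wrt (\<ge>) lam \<and> (\<forall>x\<in>set lam. 0 < x)"

text \<open>Conjugate part: number of parts exceeding j (column length of column j, 0-indexed).\<close>
definition conj_part :: "nat list \<Rightarrow> nat \<Rightarrow> nat" where
  "conj_part lam j = length (filter (\<lambda>x. j < x) lam)"

definition boxes :: "nat list \<Rightarrow> (nat \<times> nat) set" where
  "boxes lam = {(i, j). i < length lam \<and> j < lam ! i}"

text \<open>Hook length of box (i,j): arm + leg + 1.\<close>
definition hook :: "nat list \<Rightarrow> nat \<Rightarrow> nat \<Rightarrow> nat" where
  "hook lam i j = (lam ! i - j - 1) + (conj_part lam j - i - 1) + 1"

definition is_core :: "nat \<Rightarrow> nat list \<Rightarrow> bool" where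
  "is_core t lam \<longleftrightarrow> (\<forall>(i, j)\<in>boxes lam. \<not> t dvd hook lam i j)"

definition cores3 :: "nat \<Rightarrow> nat list set" where
  "cores3 s = {lam. is_partition lam \<and> is_core s lam \<and> is_core (s + 1) lam \<and> is_core (s + 2) lam}"

definition r :: "nat \<Rightarrow> nat" where
  "r s = (if s = 0 then 1 else card (cores3 s))"

definition T :: "nat \<Rightarrow> nat set" where
  "T s = {n. 0 < n \<and> \<not> (\<exists>k1 k2 k3. n = k1 * s + k2 * (s + 1) + k3 * (s + 2))}"

definition T_step :: "nat \<Rightarrow> nat \<Rightarrow> nat \<Rightarrow> bool" where
  "T_step s y x \<longleftrightarrow> y \<in> T s \<and> x \<in> T s \<and> x < y \<and> y - x \<in> {s, s + 1, s + 2}"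

text \<open>y \<ge> x in T_s (chains of length l \<ge> 0).\<close>
definition T_ge :: "nat \<Rightarrow> nat \<Rightarrow> nat \<Rightarrow> bool" where
  "T_ge s y x \<longleftrightarrow> y \<in> T s \<and> x \<in> T s \<and> (T_step s)\<^sup>*\<^sup>* y x"

definition order_ideals :: "nat \<Rightarrow> nat set set" where
  "order_ideals s = {I. I \<subseteq> T s \<and> (\<forall>y\<in>I. \<forall>x. T_ge s y x \<longrightarrow> x \<in> I)}"

definition catalan :: "nat \<Rightarrow> nat" where
  "catalan k = ((2 * k) choose k) div (k + 1)"

end

theory Submission
  imports Defs "HOL-Computational_Algebra.Formal_Power_Series"
begin

(* 1. Catalan numbers satisfy Segner's recurrence C_{m+1} = sum_j C_j C_{m-j}; we
      derive it from the square of the binomial series (1-4x)^(1/2).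
   2. With an upper Vandermonde identity this gives the Motzkin recurrence
      M_{n+2} = M_{n+1} + sum_a M_a M_{n-a} for M_s = sum_k C(s,2k) C_k.
   3. A staircase of lattice points tri n = {(m,k). 2m <= k, k+2 <= n} with a
      covering relation "(m+1,k) lies above (m,k), (m,k-1), (m,k-2)" has down-sets
      counted by the same recurrence: split by the first gap p in the bottom row.
   4. For s >= 1 the map (m,k) |-> m*s + k + 1 is an isomorphism from this
      staircase onto the poset T_s, so order ideals of T_s are counted by M_s.
   5. Via beta-sets (first-column hook lengths), a partition is a t-core iff its
      beta-set is closed under subtracting t; hence (s,s+1,s+2)-cores correspond
      exactly to order ideals of T_s. *)

(* Pascal's rule is applied by hand below; as a simp rule it expands binomials indiscriminately. *)
declare binomial_Suc_Suc[simp del]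

section \<open>Catalan numbers and Segner's recurrence\<close>

text \<open>The division in the definition of catalan is exact.\<close>
lemma catalan_times_Suc: "catalan k * Suc k = (2 * k) choose k"
proof -
  have absorb: "Suc k * ((2 * k) choose Suc k) = k * ((2 * k) choose k)"
    by (metis add_diff_cancel_right' binomial_absorb_comp binomial_absorption mult_2)
  then have eq: "(2 * k) choose k = Suc k * (((2 * k) choose k) - ((2 * k) choose Suc k))"
    by (simp add: algebra_simps diff_mult_distrib2)
  then have "((2 * k) choose k) div Suc k = ((2 * k) choose k) - ((2 * k) choose Suc k)"
    by (metis div_mult_self1_is_m zero_less_Suc)
  then show ?thesis unfolding catalan_def
    using eq by (simp add: mult.commute)
qed

lemma catalan_Suc_ratio: "real (catalan (Suc n)) * (n + 2) = 2 * (2 * n + 1) * real (catalan n)"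
proof -
  have a: "Suc n * ((2*n+2) choose Suc n) = (2*n+2) * ((2*n+1) choose n)"
    using Suc_times_binomial[of n "2*n+1"] by simp
  have b: "(2*n+1) * ((2*n) choose n) = ((2*n+1) choose Suc n) * Suc n"
    using Suc_times_binomial_eq[of "2*n" n] by simp
  have c: "(2*n+1) choose Suc n = (2*n+1) choose n"
    using binomial_symmetric[of n "2*n+1"] by simp
  have d: "catalan (Suc n) * (n+2) = (2*n+2) choose Suc n"
    using catalan_times_Suc[of "Suc n"] by simp
  have e: "catalan n * Suc n = (2*n) choose n"
    by (rule catalan_times_Suc)
  have "catalan (Suc n) * (n+2) * (n+1) * (n+1) = (Suc n * ((2*n+2) choose Suc n)) * (n+1)"
    using d by simp
  also have "\<dots> = (2*n+2) * (((2*n+1) choose Suc n) * Suc n)"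
    using a c by simp
  also have "\<dots> = (2*n+2) * ((2*n+1) * (catalan n * (n+1)))"
    using b e by simp
  finally have "(catalan (Suc n) * (n+2)) * ((n+1)*(n+1)) = (2*(2*n+1)*catalan n) * ((n+1)*(n+1))"
    by (simp add: algebra_simps)
  then have "catalan (Suc n) * (n+2) = 2 * (2*n+1) * catalan n"
    by (subst (asm) mult_right_cancel) auto
  then have "real (catalan (Suc n) * (n+2)) = real (2 * (2*n+1) * catalan n)"
    by simp
  then show ?thesis by (simp add: algebra_simps)
qed

text \<open>The coefficients of the binomial series (1 - 4x)^(1/2).\<close>
definition sqrt_coeff :: "nat \<Rightarrow> real" where
  "sqrt_coeff k = ((1/2) gchoose k) * (-4) ^ k"

lemma sqrt_coeff_0: "sqrt_coeff 0 = 1"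
  by (simp add: sqrt_coeff_def)

text \<open>The higher coefficients are -2 C_n, by comparing the ratios of consecutive terms.\<close>
lemma sqrt_coeff_Suc: "sqrt_coeff (Suc n) = -2 * real (catalan n)"
proof (induction n)
  case 0
  then show ?case by (simp add: sqrt_coeff_def catalan_def)
next
  case (Suc n)
  have "(1/2::real) * ((1/2) gchoose Suc n)
      = real (Suc n) * ((1/2) gchoose Suc n) + real (Suc (Suc n)) * ((1/2) gchoose Suc (Suc n))"
    by (rule gbinomial_mult_1)
  then have step: "real (Suc (Suc n)) * ((1/2) gchoose Suc (Suc n))
      = (1/2 - real (Suc n)) * ((1/2) gchoose Suc n)"
    by (simp add: algebra_simps)
  have "sqrt_coeff (Suc (Suc n)) * (real n + 2)
      = (-4) * ((-4) ^ Suc n * (real (Suc (Suc n)) * ((1/2) gchoose Suc (Suc n))))"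
    by (simp add: sqrt_coeff_def algebra_simps)
  also have "\<dots> = (-4) * ((-4) ^ Suc n * ((1/2 - real (Suc n)) * ((1/2) gchoose Suc n)))"
    by (simp only: step)
  also have "\<dots> = (2 * (2 * real n + 1)) * sqrt_coeff (Suc n)"
    by (simp add: sqrt_coeff_def algebra_simps)
  also have "\<dots> = -2 * (real (catalan (Suc n)) * (real n + 2))"
    using Suc catalan_Suc_ratio[of n] by (simp add: algebra_simps)
  finally show ?case
    by (metis (no_types, lifting) mult.assoc mult_right_cancel add_nonneg_pos
        of_nat_0_le_iff zero_less_numeral order_less_irrefl)
qed

text \<open>Squaring the series gives 1 - 4x, so the coefficients of degree n \<ge> 2
  of the square vanish (Vandermonde's identity for generalised binomials).\<close>
lemma sqrt_coeff_square:
  assumes "n \<ge> 2"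
  shows "(\<Sum>k=0..n. sqrt_coeff k * sqrt_coeff (n - k)) = 0"
proof -
  have one_choose: "(1::real) gchoose n = 0"
  proof -
    have "of_nat ((1::nat) choose n) = ((1::real) gchoose n)"
      using binomial_gbinomial[of 1 n, where 'a=real] by (simp only: of_nat_1)
    moreover have "(1::nat) choose n = 0"
      using assms by (intro binomial_eq_0) simp
    ultimately show ?thesis by (metis of_nat_0)
  qed
  have "(\<Sum>k=0..n. sqrt_coeff k * sqrt_coeff (n - k))
      = (-4) ^ n * (\<Sum>k=0..n. ((1/2::real) gchoose k) * ((1/2) gchoose (n - k)))"
    unfolding sum_distrib_left
  proof (rule sum.cong)
    fix k assume "k \<in> {0..n}"
    then have "k + (n - k) = n" by simp
    then have pow: "(-4::real) ^ k * (-4) ^ (n - k) = (-4) ^ n" by (metis power_add)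
    have "sqrt_coeff k * sqrt_coeff (n - k)
        = ((-4::real) ^ k * (-4) ^ (n - k)) * (((1/2::real) gchoose k) * ((1/2) gchoose (n - k)))"
      unfolding sqrt_coeff_def by (simp only: mult_ac)
    then show "sqrt_coeff k * sqrt_coeff (n - k)
        = (-4) ^ n * (((1/2::real) gchoose k) * ((1/2) gchoose (n - k)))"
      by (simp only: pow)
  qed simp
  also have "\<dots> = 0"
    using gbinomial_Vandermonde[of "1/2::real" "1/2" n] one_choose by simp
  finally show ?thesis .
qed

lemma catalan_Suc: "catalan (Suc m) = (\<Sum>j\<le>m. catalan j * catalan (m - j))"
proof -
  define n where "n = Suc (Suc m)"
  have "(\<Sum>k=0..n. sqrt_coeff k * sqrt_coeff (n - k))
      = sqrt_coeff 0 * sqrt_coeff n + (\<Sum>j=0..m. sqrt_coeff (Suc j) * sqrt_coeff (n - Suc j))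
        + sqrt_coeff n * sqrt_coeff 0"
  proof -
    have "(\<Sum>k=0..n. sqrt_coeff k * sqrt_coeff (n - k))
        = sqrt_coeff 0 * sqrt_coeff n + (\<Sum>j=0..Suc m. sqrt_coeff (Suc j) * sqrt_coeff (n - Suc j))"
      using sum.atLeast0_atMost_Suc_shift[of "\<lambda>k. sqrt_coeff k * sqrt_coeff (n - k)" "Suc m"]
      by (simp only: n_def o_def diff_zero)
    also have "(\<Sum>j=0..Suc m. sqrt_coeff (Suc j) * sqrt_coeff (n - Suc j))
        = (\<Sum>j=0..m. sqrt_coeff (Suc j) * sqrt_coeff (n - Suc j)) + sqrt_coeff n * sqrt_coeff 0"
      unfolding sum.atLeast0_atMost_Suc[of _ m] by (simp add: n_def)
    finally show ?thesis by simp
  qed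
  also have "(\<Sum>j=0..m. sqrt_coeff (Suc j) * sqrt_coeff (n - Suc j))
      = (\<Sum>j=0..m. 4 * (real (catalan j) * real (catalan (m - j))))"
  proof (rule sum.cong)
    fix j assume "j \<in> {0..m}"
    then have "n - Suc j = Suc (m - j)" unfolding n_def by auto
    then show "sqrt_coeff (Suc j) * sqrt_coeff (n - Suc j)
        = 4 * (real (catalan j) * real (catalan (m - j)))"
      by (simp add: sqrt_coeff_Suc)
  qed simp
  finally have "0 = -4 * real (catalan (Suc m)) + 4 * (\<Sum>j=0..m. real (catalan j) * real (catalan (m - j)))"
    using sqrt_coeff_square[of n] unfolding n_def
    by (simp add: sqrt_coeff_Suc sqrt_coeff_0 sum_distrib_left)
  then have "real (catalan (Suc m)) = real (\<Sum>j\<le>m. catalan j * catalan (m - j))"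
    by (simp add: atLeast0AtMost)
  then show ?thesis by (simp only: of_nat_eq_iff)
qed

section \<open>Motzkin numbers and their recurrence\<close>

text \<open>An upper Vandermonde identity: choosing p+q+1 elements of {0..n} according
  to the position a of the (p+1)-st chosen element.\<close>
lemma sum_choose_upper_convolution:
  "(\<Sum>a\<le>n. (a choose p) * ((n - a) choose q)) = Suc n choose (p + q + 1)"
proof (induction n arbitrary: q)
  case 0
  then show ?case by (cases p; cases q) (simp_all add: binomial_Suc_Suc)
next
  case (Suc n)
  show ?case
  proof (cases q)
    case 0
    then show ?thesis using sum_choose_upper[of p "Suc n"] by simp
  next
    case (Suc q')
    have "(\<Sum>a\<le>Suc n. (a choose p) * ((Suc n - a) choose q))
        = (\<Sum>a\<le>n. (a choose p) * ((Suc n - a) choose q))"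
      using Suc by simp
    also have "\<dots> = (\<Sum>a\<le>n. (a choose p) * ((n - a) choose q') + (a choose p) * ((n - a) choose q))"
    proof (rule sum.cong)
      fix a assume "a \<in> {..n}"
      then have "Suc n - a = Suc (n - a)" by auto
      then show "(a choose p) * ((Suc n - a) choose q)
          = (a choose p) * ((n - a) choose q') + (a choose p) * ((n - a) choose q)"
        using Suc by (simp add: binomial_Suc_Suc algebra_simps)
    qed simp
    also have "\<dots> = (Suc n choose (p + q' + 1)) + (Suc n choose (p + q + 1))"
      by (simp add: sum.distrib Suc.IH)
    also have "\<dots> = Suc (Suc n) choose (p + q + 1)"
      using Suc by (simp add: binomial_Suc_Suc)
    finally show ?thesis .
  qed
qed

definition motzkin :: "nat \<Rightarrow> nat" where
  "motzkin s = (\<Sum>k\<le>s. (s choose (2 * k)) * catalan k)"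

text \<open>Terms with 2k > s vanish, so the summation range may be enlarged.\<close>
lemma motzkin_extend: "s \<le> B \<Longrightarrow> motzkin s = (\<Sum>k\<le>B. (s choose (2 * k)) * catalan k)"
  unfolding motzkin_def by (rule sum.mono_neutral_left) auto

text \<open>Pascal's rule applied to C(n+2, 2k).\<close>
lemma motzkin_Suc_Suc_pascal:
  "motzkin (Suc (Suc n)) = motzkin (Suc n) + (\<Sum>m\<le>n. (Suc n choose (2*m+1)) * catalan (Suc m))"
proof -
  have shift: "motzkin s = 1 + (\<Sum>m\<le>Suc n. (s choose (2*m+2)) * catalan (Suc m))"
    if "s \<le> Suc (Suc n)" for s
  proof -
    have "motzkin s = (\<Sum>k\<le>Suc (Suc n). (s choose (2*k)) * catalan k)"
      using that by (rule motzkin_extend)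
    then show ?thesis by (subst (asm) sum.atMost_Suc_shift) (simp add: catalan_def)
  qed
  have "motzkin (Suc (Suc n)) = 1 + (\<Sum>m\<le>Suc n. (Suc n choose (2*m+2)) * catalan (Suc m))
       + (\<Sum>m\<le>Suc n. (Suc n choose (2*m+1)) * catalan (Suc m))"
    using shift[of "Suc (Suc n)"] by (simp add: binomial_Suc_Suc sum.distrib algebra_simps)
  then show ?thesis
    using shift[of "Suc n"] by simp
qed

text \<open>The convolution of Motzkin numbers, via the upper Vandermonde identity and
  Segner's recurrence.\<close>
lemma motzkin_convolution:
  "(\<Sum>a\<le>n. motzkin a * motzkin (n - a)) = (\<Sum>m\<le>n. (Suc n choose (2*m+1)) * catalan (Suc m))"
proof -
  define F where "F k l = catalan k * catalan l * (Suc n choose (2*(k+l)+1))" for k l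
  have "(\<Sum>a\<le>n. motzkin a * motzkin (n - a))
      = (\<Sum>a\<le>n. (\<Sum>k\<le>n. (a choose (2*k)) * catalan k) * (\<Sum>l\<le>n. ((n-a) choose (2*l)) * catalan l))"
    by (rule sum.cong) (auto simp: motzkin_extend)
  also have "\<dots> = (\<Sum>a\<le>n. \<Sum>k\<le>n. \<Sum>l\<le>n. catalan k * catalan l * ((a choose (2*k)) * ((n-a) choose (2*l))))"
    by (rule sum.cong[OF refl]) (simp add: sum_product mult_ac)
  also have "\<dots> = (\<Sum>k\<le>n. \<Sum>l\<le>n. \<Sum>a\<le>n. catalan k * catalan l * ((a choose (2*k)) * ((n-a) choose (2*l))))"
    by (subst sum.swap, rule sum.cong[OF refl], rule sum.swap)
  also have "\<dots> = (\<Sum>k\<le>n. \<Sum>l\<le>n. F k l)"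
    by (simp add: F_def sum_choose_upper_convolution sum_distrib_left[symmetric] algebra_simps
        del: sum.swap)
  also have "\<dots> = (\<Sum>(k,l)\<in>{(k,l). k+l \<le> n}. F k l)"
    unfolding sum.cartesian_product
    by (rule sum.mono_neutral_right) (auto simp: F_def binomial_eq_0)
  also have "\<dots> = (\<Sum>m\<le>n. \<Sum>j\<le>m. F j (m - j))"
    by (rule sum.triangle_reindex_eq)
  also have "\<dots> = (\<Sum>m\<le>n. (Suc n choose (2*m+1)) * catalan (Suc m))"
    by (rule sum.cong) (simp_all add: F_def catalan_Suc sum_distrib_left algebra_simps)
  finally show ?thesis .
qed

lemma motzkin_Suc_Suc:
  "motzkin (Suc (Suc n)) = motzkin (Suc n) + (\<Sum>a\<le>n. motzkin a * motzkin (n - a))"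
  using motzkin_Suc_Suc_pascal motzkin_convolution by simp

section \<open>Down-sets of a staircase of lattice points\<close>

text \<open>The staircase tri n, later identified with T_n via (m,k) |-> m n + k + 1.
  Its covering relation puts (m+1,k) above (m,k), (m,k-1) and (m,k-2).\<close>
definition tri :: "nat \<Rightarrow> (nat \<times> nat) set" where
  "tri n = {(m, k). 2 * m \<le> k \<and> k + 2 \<le> n}"

definition tri_closed :: "(nat \<times> nat) set \<Rightarrow> bool" where
  "tri_closed S \<longleftrightarrow> (\<forall>m k. (Suc m, k) \<in> S \<longrightarrow> (m, k) \<in> S \<and> (m, k - 1) \<in> S \<and> (m, k - 2) \<in> S)"

definition tri_ideals :: "nat \<Rightarrow> (nat \<times> nat) set set" where
  "tri_ideals n = {S. S \<subseteq> tri n \<and> tri_closed S}"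

lemma finite_tri: "finite (tri n)"
proof -
  have "tri n \<subseteq> {..n} \<times> {..n}" unfolding tri_def by auto
  then show ?thesis by (rule finite_subset) simp
qed

lemma finite_tri_ideals: "finite (tri_ideals n)"
proof -
  have "tri_ideals n \<subseteq> Pow (tri n)" unfolding tri_ideals_def by auto
  then show ?thesis by (rule finite_subset) (simp add: finite_tri)
qed

lemma tri_ideals_le_1: "n \<le> 1 \<Longrightarrow> tri_ideals n = {{}}"
  unfolding tri_ideals_def tri_def tri_closed_def by auto

lemma tri_closed_cone:
  assumes "tri_closed S" "(m, k) \<in> S" "k \<le> p + 2 * m" "p \<le> k"
  shows "(0, p) \<in> S"
  using assms(2-)
proof (induction m arbitrary: k)
  case 0
  then show ?case by auto
next
  case (Suc m)
  define k' where "k' = max p (k - 2)"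
  have "(m, k) \<in> S" "(m, k - 1) \<in> S" "(m, k - 2) \<in> S"
    using Suc.prems assms(1) unfolding tri_closed_def by auto
  moreover have "k' = k \<or> k' = k - 1 \<or> k' = k - 2"
    using Suc.prems unfolding k'_def by auto
  ultimately have "(m, k') \<in> S" by auto
  moreover have "k' \<le> p + 2 * m" "p \<le> k'"
    using Suc.prems unfolding k'_def by auto
  ultimately show ?case using Suc.IH by blast
qed

definition gap_ideals :: "nat \<Rightarrow> nat \<Rightarrow> (nat \<times> nat) set set" where
  "gap_ideals n p = {S \<in> tri_ideals n. (\<forall>k<p. (0, k) \<in> S) \<and> (0, p) \<notin> S}"

text \<open>Every down-set misses some point (0,p) with p < n (the point (0,n-1) is outside
  the staircase), so the down-sets are partitioned by the first missing p.\<close>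
lemma card_tri_ideals_by_gap:
  assumes "n \<ge> 1"
  shows "card (tri_ideals n) = (\<Sum>p<n. card (gap_ideals n p))"
proof -
  have "tri_ideals n = (\<Union>p<n. gap_ideals n p)"
  proof
    show "tri_ideals n \<subseteq> (\<Union>p<n. gap_ideals n p)"
    proof
      fix S assume S: "S \<in> tri_ideals n"
      have notin: "(0, n - 1) \<notin> S" using S assms unfolding tri_ideals_def tri_def by auto
      define p where "p = (LEAST k. (0, k) \<notin> S)"
      have "(0, p) \<notin> S" unfolding p_def by (rule LeastI) (rule notin)
      moreover have "p \<le> n - 1" unfolding p_def by (rule Least_le) (rule notin)
      moreover have "\<forall>k<p. (0, k) \<in> S" unfolding p_def using not_less_Least by blast
      ultimately show "S \<in> (\<Union>p<n. gap_ideals n p)"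
        using S assms unfolding gap_ideals_def by auto
    qed
  qed (auto simp: gap_ideals_def)
  moreover have "card (\<Union>p<n. gap_ideals n p) = (\<Sum>p<n. card (gap_ideals n p))"
  proof (rule card_UN_disjoint)
    show "\<forall>p\<in>{..<n}. finite (gap_ideals n p)"
      using finite_tri_ideals by (auto simp: gap_ideals_def)
    show "\<forall>p\<in>{..<n}. \<forall>q\<in>{..<n}. p \<noteq> q \<longrightarrow> gap_ideals n p \<inter> gap_ideals n q = {}"
      unfolding gap_ideals_def by (auto simp: linorder_neq_iff)
  qed simp
  ultimately show ?thesis by simp
qed

subsection \<open>Empty bottom row: shifting by one column\<close>

definition shift_up :: "(nat \<times> nat) set \<Rightarrow> (nat \<times> nat) set" where
  "shift_up S = {(m, Suc k) | m k. (m, k) \<in> S}"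

definition shift_down :: "(nat \<times> nat) set \<Rightarrow> (nat \<times> nat) set" where
  "shift_down S = {(m, k). (m, Suc k) \<in> S}"

lemma shift_up_ideal: "S \<in> tri_ideals n \<Longrightarrow> shift_up S \<in> gap_ideals (Suc n) 0"
proof -
  assume S: "S \<in> tri_ideals n"
  have "shift_up S \<subseteq> tri (Suc n)" using S unfolding shift_up_def tri_ideals_def tri_def by auto
  moreover have "tri_closed (shift_up S)"
    unfolding tri_closed_def
  proof (intro allI impI)
    fix m k assume "(Suc m, k) \<in> shift_up S"
    then obtain k0 where k0: "k = Suc k0" "(Suc m, k0) \<in> S" unfolding shift_up_def by auto
    then have "k0 \<ge> 2" using S unfolding tri_ideals_def tri_def by auto
    have "(m, k0) \<in> S" "(m, k0 - 1) \<in> S" "(m, k0 - 2) \<in> S"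
      using k0 S unfolding tri_ideals_def tri_closed_def by auto
    then have "(m, Suc k0) \<in> shift_up S" "(m, Suc (k0 - 1)) \<in> shift_up S" "(m, Suc (k0 - 2)) \<in> shift_up S"
      unfolding shift_up_def by blast+
    moreover have "Suc (k0 - 1) = k - 1" "Suc (k0 - 2) = k - 2" using k0 \<open>k0 \<ge> 2\<close> by arith+
    ultimately show "(m, k) \<in> shift_up S \<and> (m, k - 1) \<in> shift_up S \<and> (m, k - 2) \<in> shift_up S"
      using k0 by simp
  qed
  moreover have "(0, 0) \<notin> shift_up S" unfolding shift_up_def by auto
  ultimately show ?thesis unfolding gap_ideals_def tri_ideals_def by auto
qed

text \<open>If (0,0) is missing, the cone lemma shows that column 0 is empty.\<close>
lemma shift_down_ideal:
  assumes S: "S \<in> gap_ideals (Suc n) 0"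
  shows "shift_down S \<in> tri_ideals n \<and> (\<forall>m. (m, 0) \<notin> S)"
proof -
  have closed: "tri_closed S" and sub: "S \<subseteq> tri (Suc n)" and z: "(0, 0) \<notin> S"
    using S unfolding gap_ideals_def tri_ideals_def by auto
  have above: "k \<ge> Suc (2 * m)" if "(m, k) \<in> S" for m k
    using tri_closed_cone[OF closed that, of 0] z by (cases "k \<le> 2 * m") auto
  have "shift_down S \<subseteq> tri n" using sub above unfolding shift_down_def tri_def by fastforce
  moreover have "tri_closed (shift_down S)"
    unfolding tri_closed_def
  proof (intro allI impI)
    fix m k assume "(Suc m, k) \<in> shift_down S"
    then have a: "(Suc m, Suc k) \<in> S" unfolding shift_down_def by auto
    then have "k \<ge> 2" using above[OF a] by auto
    from closed a have "(m, Suc k) \<in> S \<and> (m, Suc k - 1) \<in> S \<and> (m, Suc k - 2) \<in> S"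
      unfolding tri_closed_def by blast
    then have "(m, Suc k) \<in> S" "(m, k) \<in> S" "(m, k - 1) \<in> S" by auto
    then show "(m, k) \<in> shift_down S \<and> (m, k - 1) \<in> shift_down S \<and> (m, k - 2) \<in> shift_down S"
      using \<open>k \<ge> 2\<close> unfolding shift_down_def by (auto simp: Suc_diff_Suc numeral_2_eq_2)
  qed
  ultimately show ?thesis using above unfolding tri_ideals_def by fastforce
qed

lemma card_gap_ideals_0: "card (gap_ideals (Suc n) 0) = card (tri_ideals n)"
proof -
  have "bij_betw shift_up (tri_ideals n) (gap_ideals (Suc n) 0)"
  proof (rule bij_betw_byWitness[where f' = shift_down])
    show "\<forall>S\<in>tri_ideals n. shift_down (shift_up S) = S"
      unfolding shift_up_def shift_down_def by auto
    show "\<forall>S\<in>gap_ideals (Suc n) 0. shift_up (shift_down S) = S"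
      using shift_down_ideal unfolding shift_up_def shift_down_def
      by auto (metis not0_implies_Suc)
    show "shift_up ` tri_ideals n \<subseteq> gap_ideals (Suc n) 0" using shift_up_ideal by blast
    show "shift_down ` gap_ideals (Suc n) 0 \<subseteq> tri_ideals n" using shift_down_ideal by blast
  qed
  then show ?thesis by (simp add: bij_betw_same_card)
qed

subsection \<open>First gap at p \<ge> 1: splitting into two smaller staircases\<close>

text \<open>A down-set with bottom row {0..<p} decomposes into the part above the row
  segment (a down-set of tri (p-1), shifted by (1,2)) and the part to the right of
  the cone over (0,p) (a down-set of tri (n-1-p), shifted by p+1).\<close>
definition left_part :: "nat \<Rightarrow> (nat \<times> nat) set \<Rightarrow> (nat \<times> nat) set" where
  "left_part p S = {(m, k). (Suc m, k + 2) \<in> S \<and> k + 3 \<le> p}"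

definition right_part :: "nat \<Rightarrow> (nat \<times> nat) set \<Rightarrow> (nat \<times> nat) set" where
  "right_part p S = {(m, k). (m, k + p + 1) \<in> S}"

definition glue :: "nat \<Rightarrow> (nat \<times> nat) set \<Rightarrow> (nat \<times> nat) set \<Rightarrow> (nat \<times> nat) set" where
  "glue p A B = {(0, k) | k. k < p} \<union> {(Suc m, k + 2) | m k. (m, k) \<in> A}
                \<union> {(m, k + p + 1) | m k. (m, k) \<in> B}"

lemma left_part_glue: "A \<in> tri_ideals (p - 1) \<Longrightarrow> left_part p (glue p A B) = A"
  unfolding left_part_def glue_def tri_ideals_def tri_def by auto

lemma right_part_glue: "A \<in> tri_ideals (p - 1) \<Longrightarrow> right_part p (glue p A B) = B"
  unfolding right_part_def glue_def tri_ideals_def tri_def by auto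

text \<open>The glued set is closed: covering steps stay inside the shifted copy of A,
  inside the shifted copy of B, or lead from the copy of A into the bottom row.\<close>
lemma glue_closed:
  assumes A: "A \<in> tri_ideals (p - 1)" and B: "B \<in> tri_ideals (n - 1 - p)"
  shows "tri_closed (glue p A B)"
  unfolding tri_closed_def
proof (intro allI impI)
  have AP: "A \<subseteq> tri (p - 1)" and Ac: "tri_closed A"
    and BP: "B \<subseteq> tri (n - 1 - p)" and Bc: "tri_closed B"
    using A B unfolding tri_ideals_def by auto
  fix m k assume "(Suc m, k) \<in> glue p A B"
  then consider (left) k' where "k = k' + 2" "(m, k') \<in> A"
    | (right) k' where "k = k' + p + 1" "(Suc m, k') \<in> B"
    unfolding glue_def by blast
  then show "(m, k) \<in> glue p A B \<and> (m, k - 1) \<in> glue p A B \<and> (m, k - 2) \<in> glue p A B"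
  proof cases
    case left
    show ?thesis
    proof (cases m)
      case 0
      then show ?thesis using left AP unfolding glue_def tri_def by auto
    next
      case (Suc m')
      have "(m', k') \<in> A \<and> (m', k' - 1) \<in> A \<and> (m', k' - 2) \<in> A"
        using left Ac Suc unfolding tri_closed_def by blast
      moreover have "k' \<ge> 2" using left AP Suc unfolding tri_def by auto
      ultimately have "(Suc m', k' + 2) \<in> glue p A B \<and> (Suc m', (k' - 1) + 2) \<in> glue p A B
          \<and> (Suc m', (k' - 2) + 2) \<in> glue p A B"
        unfolding glue_def by blast
      moreover have "(k' - 1) + 2 = k - 1" "(k' - 2) + 2 = k - 2" "k' + 2 = k"
        using left \<open>k' \<ge> 2\<close> by arith+
      ultimately show ?thesis using Suc by metis
    qed
  next
    case right
    have "(m, k') \<in> B \<and> (m, k' - 1) \<in> B \<and> (m, k' - 2) \<in> B"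
      using right Bc unfolding tri_closed_def by blast
    moreover have "k' \<ge> 2" using right BP unfolding tri_def by auto
    ultimately have "(m, k' + p + 1) \<in> glue p A B \<and> (m, (k' - 1) + p + 1) \<in> glue p A B
        \<and> (m, (k' - 2) + p + 1) \<in> glue p A B"
      unfolding glue_def by blast
    moreover have "(k' - 1) + p + 1 = k - 1" "(k' - 2) + p + 1 = k - 2" "k' + p + 1 = k"
      using right \<open>k' \<ge> 2\<close> by arith+
    ultimately show ?thesis by metis
  qed
qed

lemma glue_gap_ideal:
  assumes A: "A \<in> tri_ideals (p - 1)" and B: "B \<in> tri_ideals (n - 1 - p)" and p: "1 \<le> p" "p < n"
  shows "glue p A B \<in> gap_ideals n p"
proof -
  have "glue p A B \<subseteq> tri n"
    using A B p unfolding glue_def tri_ideals_def tri_def by auto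
  moreover have "\<forall>k<p. (0, k) \<in> glue p A B" "(0, p) \<notin> glue p A B"
    unfolding glue_def by auto
  ultimately show ?thesis
    using glue_closed[OF A B] unfolding gap_ideals_def tri_ideals_def by auto
qed

lemma gap_ideal_avoids_cone:
  assumes "S \<in> gap_ideals n p" "(m, k) \<in> S"
  shows "k < p \<or> p + 2 * m < k"
  using assms tri_closed_cone[of S m k p] unfolding gap_ideals_def tri_ideals_def by force

lemma left_part_ideal:
  assumes S: "S \<in> gap_ideals n p"
  shows "left_part p S \<in> tri_ideals (p - 1)"
proof -
  have SP: "S \<subseteq> tri n" and Sc: "tri_closed S"
    using S unfolding gap_ideals_def tri_ideals_def by auto
  have "tri_closed (left_part p S)"
    unfolding tri_closed_def
  proof (intro allI impI)
    fix m k assume "(Suc m, k) \<in> left_part p S"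
    then have a: "(Suc (Suc m), k + 2) \<in> S" "k + 3 \<le> p" unfolding left_part_def by auto
    then have "k \<ge> 2" using SP unfolding tri_def by auto
    have "(Suc m, k + 2) \<in> S \<and> (Suc m, k + 2 - 1) \<in> S \<and> (Suc m, k + 2 - 2) \<in> S"
      using a Sc unfolding tri_closed_def by blast
    moreover have "k + 2 - 1 = (k - 1) + 2" "k + 2 - 2 = (k - 2) + 2" using \<open>k \<ge> 2\<close> by arith+
    ultimately show "(m, k) \<in> left_part p S \<and> (m, k - 1) \<in> left_part p S \<and> (m, k - 2) \<in> left_part p S"
      using a unfolding left_part_def by auto
  qed
  moreover have "left_part p S \<subseteq> tri (p - 1)"
    using SP unfolding left_part_def tri_def by auto
  ultimately show ?thesis unfolding tri_ideals_def by auto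
qed

text \<open>The right part is a down-set of tri (n-1-p); it lies in the staircase
  because the cone over (0,p) is avoided.\<close>
lemma right_part_ideal:
  assumes S: "S \<in> gap_ideals n p"
  shows "right_part p S \<in> tri_ideals (n - 1 - p)"
proof -
  have SP: "S \<subseteq> tri n" and Sc: "tri_closed S"
    using S unfolding gap_ideals_def tri_ideals_def by auto
  have RP: "right_part p S \<subseteq> tri (n - 1 - p)"
  proof
    fix x assume "x \<in> right_part p S"
    then obtain m k where x: "x = (m, k)" "(m, k + p + 1) \<in> S" unfolding right_part_def by auto
    then have "2 * m \<le> k" using gap_ideal_avoids_cone[OF S x(2)] by auto
    then show "x \<in> tri (n - 1 - p)" using x SP unfolding tri_def by auto
  qed
  moreover have "tri_closed (right_part p S)"
    unfolding tri_closed_def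
  proof (intro allI impI)
    fix m k assume k: "(Suc m, k) \<in> right_part p S"
    then have a: "(Suc m, k + p + 1) \<in> S" unfolding right_part_def by auto
    have "k \<ge> 2" using RP k unfolding tri_def by auto
    have "(m, k + p + 1) \<in> S \<and> (m, k + p + 1 - 1) \<in> S \<and> (m, k + p + 1 - 2) \<in> S"
      using a Sc unfolding tri_closed_def by blast
    moreover have "k + p + 1 - 1 = (k - 1) + p + 1" "k + p + 1 - 2 = (k - 2) + p + 1"
      using \<open>k \<ge> 2\<close> by arith+
    ultimately show "(m, k) \<in> right_part p S \<and> (m, k - 1) \<in> right_part p S \<and> (m, k - 2) \<in> right_part p S"
      unfolding right_part_def by auto
  qed
  ultimately show ?thesis unfolding tri_ideals_def by auto
qed

text \<open>Every point of the down-set is in the bottom row, in the left part or in the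
  right part, so gluing the two parts recovers it.\<close>
lemma glue_parts:
  assumes S: "S \<in> gap_ideals n p"
  shows "glue p (left_part p S) (right_part p S) = S"
proof
  have SP: "S \<subseteq> tri n" and row: "\<forall>k<p. (0, k) \<in> S"
    using S unfolding gap_ideals_def tri_ideals_def by auto
  show "glue p (left_part p S) (right_part p S) \<subseteq> S"
    using row unfolding glue_def left_part_def right_part_def by auto
  show "S \<subseteq> glue p (left_part p S) (right_part p S)"
  proof
    fix x assume "x \<in> S"
    then obtain m k where x: "x = (m, k)" and mk: "(m, k) \<in> S" by (cases x) auto
    consider "k < p" "m = 0" | m' where "k < p" "m = Suc m'" | "p + 2 * m < k"
      using gap_ideal_avoids_cone[OF S mk] by (cases m) auto
    then show "x \<in> glue p (left_part p S) (right_part p S)"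
    proof cases
      case 1
      then show ?thesis using x unfolding glue_def by auto
    next
      case (2 m')
      have "k \<ge> 2" using mk SP 2 unfolding tri_def by auto
      then obtain j where j: "k = j + 2" by (metis add.commute le_Suc_ex)
      then have "(m', j) \<in> left_part p S"
        using mk 2 unfolding left_part_def by auto
      then show ?thesis using x 2 j unfolding glue_def by blast
    next
      case 3
      then have "(m, k - p - 1) \<in> right_part p S" "x = (m, (k - p - 1) + p + 1)"
        using mk x unfolding right_part_def by auto
      then show ?thesis unfolding glue_def by blast
    qed
  qed
qed

lemma card_gap_ideals:
  assumes p: "1 \<le> p" "p < n"
  shows "card (gap_ideals n p) = card (tri_ideals (p - 1)) * card (tri_ideals (n - 1 - p))"
proof -
  have "bij_betw (\<lambda>(A, B). glue p A B) (tri_ideals (p - 1) \<times> tri_ideals (n - 1 - p)) (gap_ideals n p)"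
  proof (rule bij_betw_byWitness[where f' = "\<lambda>S. (left_part p S, right_part p S)"])
    show "\<forall>x\<in>tri_ideals (p - 1) \<times> tri_ideals (n - 1 - p).
        (left_part p (case x of (A, B) \<Rightarrow> glue p A B), right_part p (case x of (A, B) \<Rightarrow> glue p A B)) = x"
      using left_part_glue right_part_glue by auto
    show "\<forall>S\<in>gap_ideals n p. (case (left_part p S, right_part p S) of (A, B) \<Rightarrow> glue p A B) = S"
      using glue_parts by auto
    show "(\<lambda>(A, B). glue p A B) ` (tri_ideals (p - 1) \<times> tri_ideals (n - 1 - p)) \<subseteq> gap_ideals n p"
      using glue_gap_ideal p by auto
    show "(\<lambda>S. (left_part p S, right_part p S)) ` gap_ideals n p
        \<subseteq> tri_ideals (p - 1) \<times> tri_ideals (n - 1 - p)"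
      using left_part_ideal right_part_ideal by auto
  qed
  then have "card (gap_ideals n p) = card (tri_ideals (p - 1) \<times> tri_ideals (n - 1 - p))"
    by (simp add: bij_betw_same_card)
  then show ?thesis by (simp add: card_cartesian_product)
qed

lemma card_tri_ideals_Suc_Suc:
  "card (tri_ideals (Suc (Suc n)))
     = card (tri_ideals (Suc n)) + (\<Sum>a\<le>n. card (tri_ideals a) * card (tri_ideals (n - a)))"
proof -
  have "card (tri_ideals (Suc (Suc n))) = (\<Sum>p<Suc (Suc n). card (gap_ideals (Suc (Suc n)) p))"
    by (rule card_tri_ideals_by_gap) simp
  also have "\<dots> = card (gap_ideals (Suc (Suc n)) 0) + (\<Sum>a<Suc n. card (gap_ideals (Suc (Suc n)) (Suc a)))"
    by (simp only: sum.lessThan_Suc_shift)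
  also have "(\<Sum>a<Suc n. card (gap_ideals (Suc (Suc n)) (Suc a)))
      = (\<Sum>a\<le>n. card (tri_ideals a) * card (tri_ideals (n - a)))"
    unfolding lessThan_Suc_atMost by (rule sum.cong) (auto simp: card_gap_ideals)
  finally show ?thesis by (simp add: card_gap_ideals_0)
qed

lemma card_tri_ideals: "card (tri_ideals s) = motzkin s"
proof (induction s rule: less_induct)
  case (less s)
  show ?case
  proof (cases "s \<le> 1")
    case True
    then have "s = 0 \<or> s = 1" by auto
    then show ?thesis using True by (auto simp: tri_ideals_le_1 motzkin_def catalan_def)
  next
    case False
    define n where "n = s - 2"
    have s: "s = Suc (Suc n)" using False unfolding n_def by simp
    have "card (tri_ideals s) = motzkin (Suc n) + (\<Sum>a\<le>n. motzkin a * motzkin (n - a))"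
      unfolding s card_tri_ideals_Suc_Suc using less.IH s by (auto intro!: sum.cong)
    then show ?thesis unfolding s motzkin_Suc_Suc .
  qed
qed

section \<open>The poset T_s is isomorphic to the staircase tri s\<close>

text \<open>A sum of M generators from {s, s+1, s+2} is M s plus an excess e \<le> 2M, and
  every such M s + e arises.\<close>
lemma generated_iff:
  fixes n s :: nat
  shows "(\<exists>k1 k2 k3. n = k1 * s + k2 * (s + 1) + k3 * (s + 2)) \<longleftrightarrow> (\<exists>M e. n = M * s + e \<and> e \<le> 2 * M)"
proof
  assume "\<exists>k1 k2 k3. n = k1 * s + k2 * (s + 1) + k3 * (s + 2)"
  then obtain k1 k2 k3 where "n = k1 * s + k2 * (s + 1) + k3 * (s + 2)" by blast
  then have "n = (k1 + k2 + k3) * s + (k2 + 2 * k3) \<and> k2 + 2 * k3 \<le> 2 * (k1 + k2 + k3)"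
    by (simp add: algebra_simps)
  then show "\<exists>M e. n = M * s + e \<and> e \<le> 2 * M" by blast
next
  assume "\<exists>M e. n = M * s + e \<and> e \<le> 2 * M"
  then obtain M e where n: "n = M * s + e" and e: "e \<le> 2 * M" by blast
  define k3 where "k3 = e div 2"
  define k2 where "k2 = e mod 2"
  have le: "k2 + k3 \<le> M" and ek: "k2 + 2 * k3 = e"
    using e unfolding k2_def k3_def by presburger+
  have "(M - (k2 + k3)) * s + k2 * (s + 1) + k3 * (s + 2) = ((M - (k2 + k3)) + k2 + k3) * s + (k2 + 2 * k3)"
    by (simp add: algebra_simps)
  also have "\<dots> = n" using le ek n by simp
  finally show "\<exists>k1 k2 k3. n = k1 * s + k2 * (s + 1) + k3 * (s + 2)" by metis
qed

lemma T_iff: "n \<in> T s \<longleftrightarrow> 0 < n \<and> \<not> (\<exists>M e. n = M * s + e \<and> e \<le> 2 * M)"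
  unfolding T_def generated_iff by simp

definition enc :: "nat \<Rightarrow> nat \<times> nat \<Rightarrow> nat" where
  "enc s x = fst x * s + snd x + 1"

lemma enc_simp [simp]: "enc s (m, k) = m * s + k + 1"
  by (simp add: enc_def)

lemma enc_in_T:
  assumes "(m, k) \<in> tri s"
  shows "enc s (m, k) \<in> T s"
proof -
  have mk: "2 * m \<le> k" "k + 2 \<le> s" using assms unfolding tri_def by auto
  have False if "m * s + k + 1 = M * s + e" "e \<le> 2 * M" for M e
  proof -
    consider "M < m" | "M = m" | "m < M" by linarith
    then show False
    proof cases
      case 1
      then have "M * s + s \<le> m * s" by (metis Suc_leI mult_Suc mult_le_mono1 add.commute)
      then show ?thesis using that mk 1 by linarith
    next
      case 2
      then show ?thesis using that mk by simp
    next
      case 3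
      then have "m * s + s \<le> M * s" by (metis Suc_leI mult_Suc mult_le_mono1 add.commute)
      then show ?thesis using that mk by linarith
    qed
  qed
  then show ?thesis unfolding T_iff by auto
qed

text \<open>Conversely, writing n = q s + j with j < s, n is not generated only if j > 2q.\<close>
lemma T_subset_enc:
  assumes "s \<ge> 1" "n \<in> T s"
  shows "n \<in> enc s ` tri s"
proof -
  define q where "q = n div s"
  define j where "j = n mod s"
  have n: "n = q * s + j" unfolding q_def j_def by simp
  have "j < s" unfolding j_def using assms(1) by simp
  moreover have "2 * q < j"
    using assms(2) n unfolding T_iff by (metis not_less)
  ultimately have "(q, j - 1) \<in> tri s" "n = enc s (q, j - 1)"
    using n unfolding tri_def by auto
  then show ?thesis by blast
qed

lemma T_eq: "s \<ge> 1 \<Longrightarrow> T s = enc s ` tri s"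
  using T_subset_enc enc_in_T by auto

lemma enc_inj: "inj_on (enc s) (tri s)"
proof (rule inj_onI)
  fix x y assume "x \<in> tri s" "y \<in> tri s" "enc s x = enc s y"
  then obtain m k m' k' where x: "x = (m, k)" "y = (m', k')" "k < s" "k' < s"
    and eq: "m * s + k = m' * s + k'"
    unfolding tri_def by auto
  have "(m * s + k) div s = m" "(m' * s + k') div s = m'"
    "(m * s + k) mod s = k" "(m' * s + k') mod s = k'"
    using x(3,4) by simp_all
  then show "x = y" using eq x(1,2) by metis
qed

lemma enc_step:
  assumes x: "(Suc m, k) \<in> tri s" and d: "d \<le> 2"
  shows "T_step s (enc s (Suc m, k)) (enc s (m, k - d))"
proof -
  have s: "s \<ge> 1" and k: "k \<ge> 2" and y: "(m, k - d) \<in> tri s"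
    using x d unfolding tri_def by auto
  have "enc s (Suc m, k) \<in> T s" "enc s (m, k - d) \<in> T s"
    using enc_in_T x y by blast+
  moreover have "enc s (Suc m, k) - enc s (m, k - d) = s + d" "enc s (m, k - d) < enc s (Suc m, k)"
    using k d s by simp_all
  ultimately show ?thesis unfolding T_step_def using d by auto
qed

lemma enc_step_cases:
  assumes x: "(m, k) \<in> tri s" and y: "(m', k') \<in> tri s"
    and step: "T_step s (enc s (m, k)) (enc s (m', k'))"
  shows "m = Suc m' \<and> (k' = k \<or> k' = k - 1 \<or> k' = k - 2)"
proof -
  have kk: "2 * m \<le> k" "k + 2 \<le> s" "2 * m' \<le> k'" "k' + 2 \<le> s" using x y unfolding tri_def by auto
  obtain d where d: "m * s + k = m' * s + k' + d" "s \<le> d" "d \<le> s + 2"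
    using step unfolding T_step_def by (intro that[of "m * s + k - (m' * s + k')"]) auto
  consider "m \<le> m'" | "m = Suc m'" | "m' + 2 \<le> m" by linarith
  then show ?thesis
  proof cases
    case 1
    then have "m * s \<le> m' * s" by simp
    then show ?thesis using d kk by linarith
  next
    case 2
    then have "s + k = k' + d" using d by simp
    then show ?thesis using d 2 by linarith
  next
    case 3
    then have "(m' + 2) * s \<le> m * s" by (rule mult_le_mono1)
    then have "m' * s + 2 * s \<le> m * s" by (simp add: algebra_simps)
    then show ?thesis using d kk 3 by linarith
  qed
qed

lemma order_ideals_iff:
  "I \<in> order_ideals s \<longleftrightarrow> I \<subseteq> T s \<and> (\<forall>y\<in>I. \<forall>x. T_step s y x \<longrightarrow> x \<in> I)"
proof
  assume "I \<in> order_ideals s"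
  then show "I \<subseteq> T s \<and> (\<forall>y\<in>I. \<forall>x. T_step s y x \<longrightarrow> x \<in> I)"
    unfolding order_ideals_def T_ge_def T_step_def by auto
next
  assume I: "I \<subseteq> T s \<and> (\<forall>y\<in>I. \<forall>x. T_step s y x \<longrightarrow> x \<in> I)"
  have "x \<in> I" if "(T_step s)\<^sup>*\<^sup>* y x" "y \<in> I" for x y
    using that by (induction rule: rtranclp_induct) (use I in blast)+
  then show "I \<in> order_ideals s" using I unfolding order_ideals_def T_ge_def by auto
qed

lemma enc_image_closed_iff:
  assumes s: "s \<ge> 1" and S: "S \<subseteq> tri s"
  shows "(\<forall>y\<in>enc s ` S. \<forall>x. T_step s y x \<longrightarrow> x \<in> enc s ` S) \<longleftrightarrow> tri_closed S"
proof
  assume closed: "\<forall>y\<in>enc s ` S. \<forall>x. T_step s y x \<longrightarrow> x \<in> enc s ` S"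
  show "tri_closed S" unfolding tri_closed_def
  proof (intro allI impI)
    fix m k assume mk: "(Suc m, k) \<in> S"
    then have mkP: "(Suc m, k) \<in> tri s" using S by auto
    have "(m, k - d) \<in> S" if d: "d \<le> 2" for d
    proof -
      have "enc s (m, k - d) \<in> enc s ` S" using closed mk enc_step[OF mkP d] by blast
      moreover have "(m, k - d) \<in> tri s" using mkP d unfolding tri_def by auto
      ultimately show ?thesis using inj_onD[OF enc_inj] S by blast
    qed
    from this[of 0] this[of 1] this[of 2]
    show "(m, k) \<in> S \<and> (m, k - 1) \<in> S \<and> (m, k - 2) \<in> S" by simp
  qed
next
  assume closed: "tri_closed S"
  show "\<forall>y\<in>enc s ` S. \<forall>x. T_step s y x \<longrightarrow> x \<in> enc s ` S"
  proof (intro ballI allI impI)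
    fix y x assume y: "y \<in> enc s ` S" and step: "T_step s y x"
    obtain m k where mk: "(m, k) \<in> S" "y = enc s (m, k)" using y by auto
    have "x \<in> T s" using step unfolding T_step_def by auto
    then obtain m' k' where mk': "(m', k') \<in> tri s" "x = enc s (m', k')" using T_eq[OF s] by auto
    have "m = Suc m' \<and> (k' = k \<or> k' = k - 1 \<or> k' = k - 2)"
      using enc_step_cases mk mk' step S by blast
    then have "(m', k') \<in> S" using closed mk unfolding tri_closed_def by auto
    then show "x \<in> enc s ` S" using mk'(2) by (intro image_eqI[where x = "(m', k')"])
  qed
qed

lemma order_ideals_eq: "s \<ge> 1 \<Longrightarrow> order_ideals s = image (enc s) ` tri_ideals s"
proof
  assume s: "s \<ge> 1"
  show "image (enc s) ` tri_ideals s \<subseteq> order_ideals s"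
  proof
    fix I assume "I \<in> image (enc s) ` tri_ideals s"
    then obtain S where S: "S \<in> tri_ideals s" "I = enc s ` S" by auto
    then have "I \<subseteq> T s" using T_eq[OF s] unfolding tri_ideals_def by auto
    then show "I \<in> order_ideals s"
      using enc_image_closed_iff[OF s] S unfolding order_ideals_iff tri_ideals_def by auto
  qed
  show "order_ideals s \<subseteq> image (enc s) ` tri_ideals s"
  proof
    fix I assume I: "I \<in> order_ideals s"
    define S where "S = {x \<in> tri s. enc s x \<in> I}"
    have "I \<subseteq> enc s ` tri s" using I T_eq[OF s] unfolding order_ideals_iff by auto
    then have eq: "enc s ` S = I" unfolding S_def by auto
    have "tri_closed S"
      using enc_image_closed_iff[OF s, of S] I eq unfolding S_def order_ideals_iff by auto
    then show "I \<in> image (enc s) ` tri_ideals s"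
      using eq unfolding S_def tri_ideals_def by auto
  qed
qed

lemma card_order_ideals: "s \<ge> 1 \<Longrightarrow> card (order_ideals s) = card (tri_ideals s)"
proof -
  assume s: "s \<ge> 1"
  have "inj_on (image (enc s)) (tri_ideals s)"
    using inj_on_image_Pow[OF enc_inj] by (rule inj_on_subset) (auto simp: tri_ideals_def)
  then show ?thesis unfolding order_ideals_eq[OF s] by (rule card_image)
qed

section \<open>Beta-sets of partitions\<close>

text \<open>The beta-number of row i is the hook length of its first box; the beta-set
  collects them.  The gap numbers gap_num lam j index the columns j < lam!0 and
  are exactly the integers below the largest beta-number that are not in the set.\<close>
definition beta_num :: "nat list \<Rightarrow> nat \<Rightarrow> nat" where
  "beta_num lam i = lam ! i + (length lam - Suc i)"

definition beta_set :: "nat list \<Rightarrow> nat set" where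
  "beta_set lam = beta_num lam ` {..<length lam}"

definition gap_num :: "nat list \<Rightarrow> nat \<Rightarrow> nat" where
  "gap_num lam j = j + length lam - conj_part lam j"

lemma partition_nth_mono:
  "is_partition lam \<Longrightarrow> i \<le> i' \<Longrightarrow> i' < length lam \<Longrightarrow> lam ! i' \<le> lam ! i"
  unfolding is_partition_def by (cases "i = i'") (auto simp: sorted_wrt_iff_nth_less)

lemma partition_nth_pos: "is_partition lam \<Longrightarrow> i < length lam \<Longrightarrow> 0 < lam ! i"
  unfolding is_partition_def by auto

lemma beta_num_gap:
  "is_partition lam \<Longrightarrow> i \<le> i' \<Longrightarrow> i' < length lam \<Longrightarrow> beta_num lam i' + (i' - i) \<le> beta_num lam i"
  using partition_nth_mono[of lam i i'] unfolding beta_num_def by auto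

lemma beta_num_lower: "is_partition lam \<Longrightarrow> i < length lam \<Longrightarrow> length lam - i \<le> beta_num lam i"
  using partition_nth_pos[of lam i] unfolding beta_num_def by auto

text \<open>The defining identity of beta-numbers without truncated subtraction.\<close>
lemma beta_num_eq: "i < length lam \<Longrightarrow> beta_num lam i + i + 1 = lam ! i + length lam"
  unfolding beta_num_def by simp

lemma beta_num_in: "i < length lam \<Longrightarrow> beta_num lam i \<in> beta_set lam"
  unfolding beta_set_def by auto

lemma beta_set_pos: "is_partition lam \<Longrightarrow> x \<in> beta_set lam \<Longrightarrow> 0 < x"
  unfolding beta_set_def using beta_num_lower by fastforce

lemma finite_beta_set: "finite (beta_set lam)"
  unfolding beta_set_def by simp

lemma down_closed_eq_lessThan:
  assumes "finite S" "\<And>k k'. k \<in> S \<Longrightarrow> k' \<le> k \<Longrightarrow> k' \<in> S"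
  shows "S = {..<card S}"
proof (cases "S = {}")
  case False
  define M where "M = Max S"
  have "M \<in> S" using assms(1) False unfolding M_def by simp
  have "S = {..M}"
  proof
    show "S \<subseteq> {..M}" using assms(1) unfolding M_def by auto
    show "{..M} \<subseteq> S" using assms(2) \<open>M \<in> S\<close> by auto
  qed
  then show ?thesis by (simp add: lessThan_Suc_atMost[symmetric])
qed simp

lemma conj_part_card: "conj_part lam j = card {k. k < length lam \<and> j < lam ! k}"
  unfolding conj_part_def by (rule length_filter_conv_card)

lemma conj_part_iff:
  assumes p: "is_partition lam" and k: "k < length lam"
  shows "j < lam ! k \<longleftrightarrow> k < conj_part lam j"
proof -
  have "{k. k < length lam \<and> j < lam ! k} = {..<card {k. k < length lam \<and> j < lam ! k}}"
  proof (rule down_closed_eq_lessThan)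
    fix k k' assume "k \<in> {k. k < length lam \<and> j < lam ! k}" "k' \<le> k"
    then show "k' \<in> {k. k < length lam \<and> j < lam ! k}"
      using partition_nth_mono[OF p, of k' k] by auto
  qed simp
  then have "{k. k < length lam \<and> j < lam ! k} = {..<conj_part lam j}"
    by (simp add: conj_part_card)
  then show ?thesis using k by (auto simp: set_eq_iff)
qed

lemma conj_part_le: "conj_part lam j \<le> length lam"
  unfolding conj_part_def by simp

lemma conj_part_eqI:
  assumes "\<And>k. k < length lam \<Longrightarrow> j < lam ! k \<longleftrightarrow> k < c" "c \<le> length lam"
  shows "conj_part lam j = c"
proof -
  have "{k. k < length lam \<and> j < lam ! k} = {..<c}"
    using assms by (auto simp: set_eq_iff)
  then show ?thesis unfolding conj_part_card by simp
qed

lemma gap_num_notin: assumes p: "is_partition lam" shows "gap_num lam j \<notin> beta_set lam"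
proof
  assume "gap_num lam j \<in> beta_set lam"
  then obtain k where k: "k < length lam" "gap_num lam j = beta_num lam k"
    unfolding beta_set_def by auto
  have "gap_num lam j + conj_part lam j = j + length lam"
    unfolding gap_num_def using conj_part_le[of lam j] by simp
  then show False
    using beta_num_eq[OF k(1)] conj_part_iff[OF p k(1), of j] k(2) by (cases "j < lam ! k") linarith+
qed

lemma hook_eq_diff:
  assumes p: "is_partition lam" and i: "i < length lam" and j: "j < lam ! i"
  shows "hook lam i j = beta_num lam i - gap_num lam j \<and> gap_num lam j < beta_num lam i"
proof -
  have "i < conj_part lam j" using conj_part_iff[OF p i] j by simp
  moreover have "gap_num lam j + conj_part lam j = j + length lam"
    unfolding gap_num_def using conj_part_le[of lam j] by simp
  ultimately show ?thesis
    using beta_num_eq[OF i] j unfolding hook_def by linarith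
qed

lemma beta_num_above_prefix:
  assumes p: "is_partition lam"
  obtains c where "c \<le> length lam" "\<And>k. k < length lam \<Longrightarrow> y < beta_num lam k \<longleftrightarrow> k < c"
proof -
  define C where "C = {k. k < length lam \<and> y < beta_num lam k}"
  define c where "c = card C"
  have C: "C = {..<c}" unfolding c_def
  proof (rule down_closed_eq_lessThan)
    fix k k' assume "k \<in> C" "k' \<le> k"
    then show "k' \<in> C" unfolding C_def using beta_num_gap[OF p, of k' k] by auto
  qed (simp add: C_def)
  have "C \<subseteq> {..<length lam}" unfolding C_def by auto
  then have "c \<le> length lam" using C by (metis card_lessThan card_mono finite_lessThan)
  moreover have "y < beta_num lam k \<longleftrightarrow> k < c" if "k < length lam" for k
    using C that unfolding C_def by (auto simp: set_eq_iff)
  ultimately show ?thesis by (rule that)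
qed

text \<open>Conversely every non-beta number y below beta_num lam i is a gap number of a
  column j < lam!i: with c the number of beta-numbers above y, take j = y + c - length lam.\<close>
lemma gap_num_surj:
  assumes p: "is_partition lam" and i: "i < length lam"
    and y: "y \<notin> beta_set lam" "y < beta_num lam i"
  shows "\<exists>j < lam ! i. gap_num lam j = y"
proof -
  obtain c where cl: "c \<le> length lam"
    and above: "\<And>k. k < length lam \<Longrightarrow> y < beta_num lam k \<longleftrightarrow> k < c"
    using beta_num_above_prefix[OF p] by blast
  have below: "beta_num lam k < y" if "k < length lam" "c \<le> k" for k
  proof -
    have "beta_num lam k \<noteq> y" using y(1) beta_num_in[OF that(1)] by auto
    then show ?thesis using above[OF that(1)] that(2) by linarith
  qed
  have ic: "i < c" using above[OF i] y(2) by simp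
  have lyc: "length lam \<le> y + c"
  proof (cases "c = length lam")
    case False
    then have "c < length lam" using cl by simp
    then show ?thesis using below[of c] beta_num_lower[OF p, of c] by fastforce
  qed simp
  define j where "j = y + c - length lam"
  have key: "j < lam ! k \<longleftrightarrow> k < c" if k: "k < length lam" for k
  proof
    assume "k < c"
    then have c1: "c - 1 < length lam" "k \<le> c - 1" using cl by auto
    have "beta_num lam (c - 1) + (c - 1 - k) \<le> beta_num lam k" using beta_num_gap[OF p c1(2) c1(1)] .
    moreover have "y < beta_num lam (c - 1)" using above[OF c1(1)] \<open>k < c\<close> by simp
    ultimately show "j < lam ! k" using beta_num_eq[OF k] \<open>k < c\<close> lyc unfolding j_def by linarith
  next
    assume jk: "j < lam ! k"
    show "k < c"
    proof (rule ccontr)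
      assume "\<not> k < c"
      then have ck: "c \<le> k" "c < length lam" using k by auto
      have "beta_num lam k + (k - c) \<le> beta_num lam c" using beta_num_gap[OF p ck(1) k] .
      moreover have "beta_num lam c < y" using below ck(2) by simp
      ultimately show False using beta_num_eq[OF k] ck jk lyc unfolding j_def by linarith
    qed
  qed
  have "conj_part lam j = c" using key cl by (rule conj_part_eqI)
  then have "gap_num lam j = y" unfolding gap_num_def j_def using lyc by simp
  moreover have "j < lam ! i" using key[OF i] ic by simp
  ultimately show ?thesis by blast
qed

lemma core_iff_beta_closed:
  assumes p: "is_partition lam" and t: "0 < t"
  shows "is_core t lam \<longleftrightarrow> (\<forall>x\<in>beta_set lam. t \<le> x \<longrightarrow> x - t \<in> beta_set lam)"
proof
  assume core: "is_core t lam"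
  show "\<forall>x\<in>beta_set lam. t \<le> x \<longrightarrow> x - t \<in> beta_set lam"
  proof (intro ballI impI)
    fix x assume x: "x \<in> beta_set lam" "t \<le> x"
    then obtain i where i: "i < length lam" "x = beta_num lam i" unfolding beta_set_def by auto
    show "x - t \<in> beta_set lam"
    proof (rule ccontr)
      assume "x - t \<notin> beta_set lam"
      moreover have "x - t < beta_num lam i" using i x t by simp
      ultimately obtain j where j: "j < lam ! i" "gap_num lam j = x - t"
        using gap_num_surj[OF p i(1)] by blast
      have "hook lam i j = t" using hook_eq_diff[OF p i(1) j(1)] j(2) i x by simp
      moreover have "(i, j) \<in> boxes lam" using i j unfolding boxes_def by auto
      ultimately show False using core unfolding is_core_def by auto
    qed
  qed
next
  assume closed: "\<forall>x\<in>beta_set lam. t \<le> x \<longrightarrow> x - t \<in> beta_set lam"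
  have down: "B + q * t \<in> beta_set lam \<Longrightarrow> B \<in> beta_set lam" for B q
  proof (induction q)
    case (Suc q)
    then show ?case using closed[rule_format, of "B + Suc q * t"] by (simp add: add.assoc)
  qed simp
  show "is_core t lam" unfolding is_core_def
  proof (clarify)
    fix i j assume "(i, j) \<in> boxes lam" and dv: "t dvd hook lam i j"
    then have i: "i < length lam" and j: "j < lam ! i" unfolding boxes_def by auto
    obtain q where "hook lam i j = q * t" using dv by (auto simp: dvd_def mult.commute)
    then have "beta_num lam i = gap_num lam j + q * t" using hook_eq_diff[OF p i j] by linarith
    then have "gap_num lam j \<in> beta_set lam" using down[of "gap_num lam j" q] beta_num_in[OF i] by simp
    then show False using gap_num_notin[OF p] by blast
  qed
qed

text \<open>A partition is determined by its beta-set: listing the beta-numbers from the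
  last row up gives the strictly increasing enumeration of the set.\<close>
lemma beta_set_inj:
  assumes p: "is_partition lam" and q: "is_partition mu" and eq: "beta_set lam = beta_set mu"
  shows "lam = mu"
proof -
  define bl where "bl nu = map (beta_num nu) [0..<length nu]" for nu
  have sorted: "sorted_wrt (<) (rev (bl nu))" if nu: "is_partition nu" for nu
    unfolding sorted_wrt_rev bl_def
  proof (subst sorted_wrt_iff_nth_less, intro allI impI)
    fix i j assume ij: "i < j" "j < length (map (beta_num nu) [0..<length nu])"
    then have "beta_num nu j + (j - i) \<le> beta_num nu i" using beta_num_gap[OF nu, of i j] by simp
    then show "map (beta_num nu) [0..<length nu] ! j < map (beta_num nu) [0..<length nu] ! i"
      using ij by simp
  qed
  have set: "set (rev (bl nu)) = beta_set nu" for nu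
    unfolding bl_def beta_set_def by auto
  have "rev (bl lam) = rev (bl mu)"
    using sorted[OF p] sorted[OF q] set eq by (metis sorted_distinct_set_unique strict_sorted_iff)
  then have bl_eq: "bl lam = bl mu" by simp
  then have len: "length lam = length mu" unfolding bl_def by (metis length_map length_upt diff_zero)
  show "lam = mu"
  proof (rule nth_equalityI)
    fix i assume i: "i < length lam"
    have "beta_num lam i = beta_num mu i"
      using arg_cong[OF bl_eq, of "\<lambda>xs. xs ! i"] i len unfolding bl_def by simp
    then show "lam ! i = mu ! i" using i len unfolding beta_num_def by simp
  qed (rule len)
qed

lemma sorted_wrt_less_gap:
  "sorted_wrt (<) (xs :: nat list) \<Longrightarrow> j < length xs \<Longrightarrow> i \<le> j \<Longrightarrow> xs ! i + (j - i) \<le> xs ! j"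
proof (induction j)
  case (Suc j)
  show ?case
  proof (cases "i = Suc j")
    case False
    then have "xs ! i + (j - i) \<le> xs ! j" using Suc by simp
    moreover have "xs ! j < xs ! Suc j" using Suc.prems by (simp add: sorted_wrt_iff_nth_less)
    ultimately show ?thesis using False Suc.prems by linarith
  qed simp
qed simp

lemma sorted_pos_lower:
  assumes sorted: "sorted_wrt (<) xs" and pos: "0 \<notin> set xs" and p: "p < length xs"
  shows "p + 1 \<le> xs ! p"
proof -
  have "xs ! 0 \<in> set xs" using p by (metis gr_zeroI nth_mem not_less_zero)
  then have "xs ! 0 \<noteq> 0" using pos by metis
  then have "1 \<le> xs ! 0" by simp
  then show ?thesis using sorted_wrt_less_gap[OF sorted p, of 0] by simp
qed

text \<open>The partition whose beta-numbers, read from the last row up, are the entries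
  of a strictly increasing list xs: row i is xs!(l-1-i) - (l-1-i) with l = length xs.\<close>
definition of_beta_list :: "nat list \<Rightarrow> nat list" where
  "of_beta_list xs = map (\<lambda>i. xs ! (length xs - 1 - i) - (length xs - 1 - i)) [0..<length xs]"

lemma of_beta_list_partition:
  assumes sorted: "sorted_wrt (<) xs" and pos: "0 \<notin> set xs"
  shows "is_partition (of_beta_list xs)"
  unfolding is_partition_def
proof
  let ?l = "length xs"
  show "sorted_wrt (\<ge>) (of_beta_list xs)"
  proof (subst sorted_wrt_iff_nth_less, intro allI impI)
    fix i j assume ij: "i < j" "j < length (of_beta_list xs)"
    have "xs ! (?l - 1 - j) + ((?l - 1 - i) - (?l - 1 - j)) \<le> xs ! (?l - 1 - i)"
      using sorted_wrt_less_gap[OF sorted, of "?l - 1 - i" "?l - 1 - j"] ij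
      unfolding of_beta_list_def by simp
    then show "of_beta_list xs ! j \<le> of_beta_list xs ! i"
      using ij unfolding of_beta_list_def by simp
  qed
  show "\<forall>x\<in>set (of_beta_list xs). 0 < x"
  proof
    fix x assume "x \<in> set (of_beta_list xs)"
    then obtain i where i: "i < ?l" and x: "x = xs ! (?l - 1 - i) - (?l - 1 - i)"
      unfolding of_beta_list_def by auto
    have "?l - 1 - i + 1 \<le> xs ! (?l - 1 - i)"
      using sorted_pos_lower[OF sorted pos, of "?l - 1 - i"] i by simp
    then show "0 < x" unfolding x by linarith
  qed
qed

lemma beta_set_of_beta_list:
  assumes sorted: "sorted_wrt (<) xs" and pos: "0 \<notin> set xs"
  shows "beta_set (of_beta_list xs) = set xs"
proof
  let ?l = "length xs"
  have beta: "beta_num (of_beta_list xs) i = xs ! (?l - 1 - i)" if i: "i < ?l" for i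
  proof -
    have "?l - 1 - i + 1 \<le> xs ! (?l - 1 - i)"
      using sorted_pos_lower[OF sorted pos, of "?l - 1 - i"] i by simp
    then show ?thesis using i unfolding beta_num_def of_beta_list_def by simp
  qed
  show "beta_set (of_beta_list xs) \<subseteq> set xs"
    unfolding beta_set_def using beta by (auto simp: of_beta_list_def)
  show "set xs \<subseteq> beta_set (of_beta_list xs)"
  proof
    fix x assume "x \<in> set xs"
    then obtain p where p: "p < ?l" "x = xs ! p" by (auto simp: in_set_conv_nth)
    then have "x = beta_num (of_beta_list xs) (?l - 1 - p)" using beta[of "?l - 1 - p"] by simp
    moreover have "?l - 1 - p < length (of_beta_list xs)" using p by (simp add: of_beta_list_def)
    ultimately show "x \<in> beta_set (of_beta_list xs)" unfolding beta_set_def by auto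
  qed
qed

lemma beta_set_surj:
  assumes fin: "finite A" and pos: "0 \<notin> A"
  shows "\<exists>lam. is_partition lam \<and> beta_set lam = A"
proof -
  define xs where "xs = sorted_list_of_set A"
  have "sorted_wrt (<) xs" "set xs = A" unfolding xs_def using fin by simp_all
  then show ?thesis
    using of_beta_list_partition beta_set_of_beta_list pos by metis
qed

section \<open>Simultaneous cores and order ideals of T_s\<close>

definition shift_closed :: "nat \<Rightarrow> nat set \<Rightarrow> bool" where
  "shift_closed s B \<longleftrightarrow> (\<forall>x\<in>B. \<forall>t\<in>{s, s + 1, s + 2}. t \<le> x \<longrightarrow> x - t \<in> B)"

lemma cores3_iff_shift_closed:
  assumes p: "is_partition lam" and s: "s \<ge> 1"
  shows "lam \<in> cores3 s \<longleftrightarrow> shift_closed s (beta_set lam)"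
  unfolding cores3_def shift_closed_def
  using core_iff_beta_closed[OF p, of s] core_iff_beta_closed[OF p, of "s + 1"]
    core_iff_beta_closed[OF p, of "s + 2"] s p
  by auto

text \<open>A shift-closed set avoiding 0 contains no element of the semigroup generated
  by s, s+1, s+2: subtracting one generator at a time reaches 0.\<close>
lemma shift_closed_avoids_generated:
  assumes closed: "shift_closed s B" and pos: "0 \<notin> B" and e: "e \<le> 2 * M"
  shows "M * s + e \<notin> B"
  using e
proof (induction M arbitrary: e)
  case 0
  then show ?case using pos by simp
next
  case (Suc M)
  define d where "d = min e 2"
  have "e - d \<le> 2 * M" using Suc.prems unfolding d_def by auto
  then have notin: "M * s + (e - d) \<notin> B" by (rule Suc.IH)
  have "s + d \<in> {s, s + 1, s + 2}" "s + d \<le> Suc M * s + e"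
    unfolding d_def by auto
  moreover have "Suc M * s + e - (s + d) = M * s + (e - d)"
    unfolding d_def by auto
  ultimately show ?case using closed notin unfolding shift_closed_def by metis
qed

lemma T_minus_generator:
  assumes x: "x \<in> T s" and t: "t \<in> {s, s + 1, s + 2}" "t \<le> x"
  shows "x - t \<in> T s"
proof -
  obtain d where d: "t = s + d" "d \<le> 2" using t(1) by auto
  have generated: False if "x - t = M * s + e" "e \<le> 2 * M" for M e
  proof -
    have "x = Suc M * s + (e + d)" "e + d \<le> 2 * Suc M" using that d t(2) by auto
    then show False using x unfolding T_iff by blast
  qed
  have "x \<noteq> t"
  proof
    assume "x = t"
    then have "x = 1 * s + d" "d \<le> 2 * 1" using d by auto
    then show False using x unfolding T_iff by blast
  qed
  then have "0 < x - t" using t(2) by simp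
  then show ?thesis using generated unfolding T_iff by blast
qed

lemma order_ideal_iff_shift_closed:
  assumes s: "s \<ge> 1" and pos: "0 \<notin> B"
  shows "B \<in> order_ideals s \<longleftrightarrow> finite B \<and> shift_closed s B"
proof
  assume B: "B \<in> order_ideals s"
  then have BT: "B \<subseteq> T s" unfolding order_ideals_iff by auto
  have "finite B" using BT T_eq[OF s] finite_tri by (metis finite_imageI finite_subset)
  moreover have "shift_closed s B" unfolding shift_closed_def
  proof (intro ballI impI)
    fix x t assume x: "x \<in> B" and t: "t \<in> {s, s + 1, s + 2}" "t \<le> x"
    have "x - t \<in> T s" using T_minus_generator BT x t by blast
    moreover have "0 < x - t" using calculation unfolding T_iff by simp
    ultimately have "T_step s x (x - t)" using BT x t s unfolding T_step_def by auto
    then show "x - t \<in> B" using B x unfolding order_ideals_iff by blast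
  qed
  ultimately show "finite B \<and> shift_closed s B" by simp
next
  assume "finite B \<and> shift_closed s B"
  then have closed: "shift_closed s B" by simp
  have "B \<subseteq> T s"
  proof
    fix x assume "x \<in> B"
    then have "0 < x" "\<not> (\<exists>M e. x = M * s + e \<and> e \<le> 2 * M)"
      using shift_closed_avoids_generated[OF closed pos] pos by (auto intro: gr0I)
    then show "x \<in> T s" unfolding T_iff by blast
  qed
  moreover have "\<forall>y\<in>B. \<forall>x. T_step s y x \<longrightarrow> x \<in> B"
  proof (intro ballI allI impI)
    fix y x assume y: "y \<in> B" and step: "T_step s y x"
    then have "y - x \<in> {s, s + 1, s + 2}" "x < y" unfolding T_step_def by auto
    moreover have "y - x \<le> y" by simp
    ultimately have "y - (y - x) \<in> B" using closed y unfolding shift_closed_def by blast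
    then show "x \<in> B" using \<open>x < y\<close> by simp
  qed
  ultimately show "B \<in> order_ideals s" unfolding order_ideals_iff by blast
qed

lemma card_cores3: assumes s: "s \<ge> 1" shows "card (cores3 s) = card (order_ideals s)"
proof (rule bij_betw_same_card[of beta_set])
  have "inj_on beta_set (cores3 s)"
    by (rule inj_onI) (auto simp: cores3_def intro: beta_set_inj)
  moreover have "beta_set ` cores3 s = order_ideals s"
  proof
    show "beta_set ` cores3 s \<subseteq> order_ideals s"
    proof
      fix B assume "B \<in> beta_set ` cores3 s"
      then obtain lam where lam: "lam \<in> cores3 s" "B = beta_set lam" by auto
      then have p: "is_partition lam" unfolding cores3_def by auto
      have "0 \<notin> B" using beta_set_pos[OF p] lam by blast
      then show "B \<in> order_ideals s"
        using order_ideal_iff_shift_closed[OF s] cores3_iff_shift_closed[OF p s] lam finite_beta_set by auto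
    qed
    show "order_ideals s \<subseteq> beta_set ` cores3 s"
    proof
      fix B assume B: "B \<in> order_ideals s"
      have pos: "0 \<notin> B" using B T_iff[of 0 s] unfolding order_ideals_iff by auto
      then have fc: "finite B" "shift_closed s B" using order_ideal_iff_shift_closed[OF s pos] B by auto
      obtain lam where lam: "is_partition lam" "beta_set lam = B" using beta_set_surj[OF fc(1) pos] by blast
      then have "lam \<in> cores3 s" using cores3_iff_shift_closed[OF lam(1) s] fc by simp
      then show "B \<in> beta_set ` cores3 s" using lam by auto
    qed
  qed
  ultimately show "bij_betw beta_set (cores3 s) (order_ideals s)" unfolding bij_betw_def ..
qed

lemma r_eq_motzkin: "r s = motzkin s"
proof (cases "s = 0")
  case True
  then show ?thesis by (simp add: r_def motzkin_def catalan_def)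
next
  case False
  then show ?thesis
    using card_cores3 card_order_ideals card_tri_ideals by (simp add: r_def)
qed

lemma sum_reindex_2:
  "(\<Sum>i = 2..Suc (Suc n). f (i - 2) * f (Suc (Suc n) - i)) = (\<Sum>a\<le>n. f a * f (n - a))"
proof -
  have bounds: "{2..Suc (Suc n)} = {0 + 2..n + 2}" by simp
  have "(\<Sum>i = 2..Suc (Suc n). f (i - 2) * f (Suc (Suc n) - i))
      = (\<Sum>i = 0 + 2..n + 2. f (i - 2) * f (Suc (Suc n) - i))"
    by (simp only: bounds)
  also have "\<dots> = (\<Sum>a = 0..n. f (a + 2 - 2) * f (Suc (Suc n) - (a + 2)))"
    by (rule sum.shift_bounds_cl_nat_ivl)
  finally show ?thesis by (simp add: atLeast0AtMost)
qed

theorem mainTheorem3: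
  shows "(\<forall>s\<ge>1. card (cores3 s) = card (order_ideals s))
    \<and> (\<forall>s\<ge>2. r s = r (s - 1) + (\<Sum>i = 2..s. r (i - 2) * r (s - i)))
    \<and> (\<forall>s\<ge>1. r s = (\<Sum>k\<le>s. (s choose (2 * k)) * catalan k))"
proof (intro conjI allI impI)
  fix s :: nat assume "s \<ge> 1"
  then show "card (cores3 s) = card (order_ideals s)" by (rule card_cores3)
next
  fix s :: nat assume "s \<ge> 2"
  then obtain n where s: "s = Suc (Suc n)" by (metis add_2_eq_Suc le_Suc_ex)
  show "r s = r (s - 1) + (\<Sum>i = 2..s. r (i - 2) * r (s - i))"
    unfolding s sum_reindex_2 r_eq_motzkin by (simp add: motzkin_Suc_Suc)
next
  fix s :: nat
  show "r s = (\<Sum>k\<le>s. (s choose (2 * k)) * catalan k)"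
    unfolding r_eq_motzkin motzkin_def ..
qed

end
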